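(* Let $G$ consist of two parallel paths $P_1,P_2$ from $s$ to $d$ with $l_{P_1}<l_{P_2}$. Suppose the dynamics is governed by the linear decision rule, that the exogenous inputs are constant and positive, $f_s(t)=\bar f>0$ and $b_d(t)=\bar b>0$ for all $t\ge 0$, and that the initial pheromone level $p_{uv}(0)$ is positive for every edge $(u,v)\in P_1$ (the initial pheromone levels on $P_2$ and all initial flows at internal vertices are arbitrary nonnegative numbers). Then there exist constants $C_1,C_2>0$, depending on $\delta,\bar f,\bar b$, the leakage parameters, the path lengths and the initial configuration, but not on $\epsilon$, such that for every $\epsilon\in(0,1)$ and every integer $t\ge C_1+C_2\log(1/\epsilon)$ we have $\nu^f_{uv}(t)\ge 1-\epsilon$ and $\nu^b_{uv}(t)\ge 1-\epsilon$ for every edge $(u,v)\in P_1$.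
   Context: Model. $G=(V,E)$ is a finite directed graph with a source vertex $s$ and a destination vertex $d$. Time is discrete, $t=0,1,2,\dots$. The state at time $t$ consists of pheromone levels $p_{uv}(t)\ge 0$ for $(u,v)\in E$, forward flows $f_v(t)\ge 0$ and backward flows $b_v(t)\ge0$ for $v\in V$. Each vertex $v$ has a leakage parameter $l_v\in[0,1]$, and $\delta\in(0,1)$ is a fixed decay parameter. The values $f_s(t)$ and $b_d(t)$ are exogenous inputs (the flow newly appearing at $s$ and at $d$ at time $t$); all other flows are determined by the dynamics from the initial state. Linear decision rule: $f_{uv}(t)=f_u(t)\,p_{uv}(t)/\sum_{z:(u,z)\in E}p_{uz}(t)$ and $b_{uv}(t)=b_v(t)\,p_{uv}(t)/\sum_{z:(z,v)\in E}p_{zv}(t)$, with the convention that at a vertex with a single outgoing (resp. incoming) edge the entire forward (resp. backward) flow is sent along that edge. Updates: for $v\neq s$, $f_v(t+1)=(1-l_v)\sum_{z:(z,v)\in E}f_{zv}(t)$; for $u\ne d$, $b_u(t+1)=(1-l_u)\sum_{z:(u,z)\in E}b_{uz}(t)$; and $p_{uv}(t+1)=\delta\,(p_{uv}(t)+f_{uv}(t)+b_{uv}(t))$ for all $(u,v)\in E$. Normalized pheromone levels: $\nu^f_{uv}(t)=p_{uv}(t)/\sum_{z:(u,z)\in E}p_{uz}(t)$ and $\nu^b_{uv}(t)=p_{uv}(t)/\sum_{z:(z,v)\in E}p_{zv}(t)$. For a path $P$ from $s$ to $d$, its leakage is $l_P=1-\prod_{v\in P\setminus\{s,d\}}(1-l_v)$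 and its length $\mathrm{len}(P)$ is its number of edges. Two parallel paths: $G$ is the union of two directed paths $P_1,P_2$ from $s$ to $d$ that share no vertices other than $s$ and $d$. *)

theory Defs
  imports Complex_Main
begin

definition path_edges :: "'v list \<Rightarrow> ('v \<times> 'v) set" where
  "path_edges P = set (zip P (tl P))"

definition is_path :: "('v \<times> 'v) set \<Rightarrow> 'v \<Rightarrow> 'v \<Rightarrow> 'v list \<Rightarrow> bool" where
  "is_path E s d P \<longleftrightarrow> length P \<ge> 2 \<and> distinct P \<and> hd P = s \<and> last P = d
     \<and> path_edges P \<subseteq> E"

definition two_parallel_paths :: "('v \<times> 'v) set \<Rightarrow> 'v \<Rightarrow> 'v \<Rightarrow> 'v list \<Rightarrow> 'v list \<Rightarrow> bool" where
  "two_parallel_paths E s d P1 P2 \<longleftrightarrow>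
     s \<noteq> d \<and> is_path E s d P1 \<and> is_path E s d P2 \<and> P1 \<noteq> P2 \<and>
     set P1 \<inter> set P2 = {s, d} \<and> E = path_edges P1 \<union> path_edges P2"

definition path_leakage :: "('v \<Rightarrow> real) \<Rightarrow> 'v \<Rightarrow> 'v \<Rightarrow> 'v list \<Rightarrow> real" where
  "path_leakage l s d P = 1 - (\<Prod>v\<in>set P - {s, d}. (1 - l v))"

definition out_nbrs :: "('v \<times> 'v) set \<Rightarrow> 'v \<Rightarrow> 'v set" where
  "out_nbrs E u = {z. (u, z) \<in> E}"

definition in_nbrs :: "('v \<times> 'v) set \<Rightarrow> 'v \<Rightarrow> 'v set" where
  "in_nbrs E v = {z. (z, v) \<in> E}"

definition nu_f :: "('v \<times> 'v) set \<Rightarrow> ('v \<times> 'v \<Rightarrow> real) \<Rightarrow> 'v \<Rightarrow> 'v \<Rightarrow> real" where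
  "nu_f E p u v = p (u, v) / (\<Sum>z\<in>out_nbrs E u. p (u, z))"

definition nu_b :: "('v \<times> 'v) set \<Rightarrow> ('v \<times> 'v \<Rightarrow> real) \<Rightarrow> 'v \<Rightarrow> 'v \<Rightarrow> real" where
  "nu_b E p u v = p (u, v) / (\<Sum>z\<in>in_nbrs E v. p (z, v))"

text \<open>Linear decision rule, with the convention that at a vertex with a single
  outgoing (resp. incoming) edge the entire flow is sent along that edge.\<close>
definition fwd_edge_flow :: "('v \<times> 'v) set \<Rightarrow> ('v \<times> 'v \<Rightarrow> real) \<Rightarrow> ('v \<Rightarrow> real) \<Rightarrow> 'v \<Rightarrow> 'v \<Rightarrow> real" where
  "fwd_edge_flow E p f u v =
     (if card (out_nbrs E u) = 1 then f u else f u * nu_f E p u v)"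

definition bwd_edge_flow :: "('v \<times> 'v) set \<Rightarrow> ('v \<times> 'v \<Rightarrow> real) \<Rightarrow> ('v \<Rightarrow> real) \<Rightarrow> 'v \<Rightarrow> 'v \<Rightarrow> real" where
  "bwd_edge_flow E p b u v =
     (if card (in_nbrs E v) = 1 then b v else b v * nu_b E p u v)"

definition ant_dynamics ::
  "('v \<times> 'v) set \<Rightarrow> 'v \<Rightarrow> 'v \<Rightarrow> ('v \<Rightarrow> real) \<Rightarrow> real \<Rightarrow> (nat \<Rightarrow> real) \<Rightarrow> (nat \<Rightarrow> real)
   \<Rightarrow> (nat \<Rightarrow> 'v \<times> 'v \<Rightarrow> real) \<Rightarrow> (nat \<Rightarrow> 'v \<Rightarrow> real) \<Rightarrow> (nat \<Rightarrow> 'v \<Rightarrow> real) \<Rightarrow> bool" where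
  "ant_dynamics E s d l \<delta> fin bin p f b \<longleftrightarrow>
     (\<forall>e\<in>E. p 0 e \<ge> 0) \<and> (\<forall>v. f 0 v \<ge> 0) \<and> (\<forall>v. b 0 v \<ge> 0) \<and>
     (\<forall>t. f t s = fin t) \<and> (\<forall>t. b t d = bin t) \<and>
     (\<forall>t v. v \<noteq> s \<longrightarrow>
        f (Suc t) v = (1 - l v) * (\<Sum>z\<in>in_nbrs E v. fwd_edge_flow E (p t) (f t) z v)) \<and>
     (\<forall>t u. u \<noteq> d \<longrightarrow>
        b (Suc t) u = (1 - l u) * (\<Sum>z\<in>out_nbrs E u. bwd_edge_flow E (p t) (b t) u z)) \<and>
     (\<forall>t. \<forall>(u, v)\<in>E.
        p (Suc t) (u, v) = \<delta> * (p t (u, v) + fwd_edge_flow E (p t) (f t) u v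
                                           + bwd_edge_flow E (p t) (b t) u v))"

end

theory Submission
  imports Defs
begin

(* On two parallel paths the only branching happens at s (forward ants) and at d (backward
   ants); every internal vertex has a single outgoing and a single incoming edge, so the
   normalized levels on the internal edges of P1 are 1.  Ants leaving s along P_i arrive at d
   after len(P_i) - 1 steps, reduced by the transmission 1 - l_{P_i}, and symmetrically for
   backward ants.  Hence the levels A, B on the first edges of P1, P2 and C, D on their last
   edges satisfy a delayed coupled recurrence.  In it the self-reinforcement term leaves the
   ratio B/A unchanged, while the delayed cross-feed favours P1 by the factor
   (1 - l_{P1}) / (1 - l_{P2}) > 1; since decay keeps all levels bounded, max(B/A, D/C)
   shrinks by a fixed factor theta < 1 over every window of max(len P1, len P2) steps.
   Geometric decay of these ratios yields the bound C1 + C2 log(1/eps) on the time after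
   which every normalized level on P1 exceeds 1 - eps. *)

lemma weighted_mean_contraction:
  fixes w W a a0 c :: real
  assumes w: "0 < w" "w \<le> W" and a: "0 < a0" "a0 \<le> a" and c: "c \<le> 1"
  shows "(w + c * a) / (w + a) \<le> 1 - (1 - c) * (a0 / (W + a0))"
proof -
  have "a0 * w \<le> a * W"
    using w a by (intro mult_mono) auto
  then have "a0 * (w + a) \<le> a * (W + a0)"
    by (simp add: algebra_simps)
  then have "a0 / (W + a0) \<le> a / (w + a)"
    using w a by (simp add: divide_simps)
  then have "(1 - c) * (a0 / (W + a0)) \<le> (1 - c) * (a / (w + a))"
    using c by (intro mult_left_mono) auto
  moreover have "(w + c * a) / (w + a) = 1 - (1 - c) * (a / (w + a))"
    using w a by (simp add: field_simps)
  ultimately show ?thesis by (metis diff_left_mono)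
qed

lemma share_ge_of_ratio_le:
  fixes x y H :: real
  assumes "0 < x" "0 \<le> y" "y / x \<le> H"
  shows "1 / (1 + H) \<le> x / (x + y)"
proof -
  have "0 \<le> H" using assms by (smt (verit) divide_nonneg_pos)
  with assms show ?thesis by (simp add: divide_simps) (simp add: algebra_simps)
qed

lemma share_le_of_ratio_le:
  fixes x y H :: real
  assumes "0 < x" "0 \<le> y" "y / x \<le> H"
  shows "y / (x + y) \<le> H / (1 + H)"
proof -
  have "0 \<le> H" using assms by (smt (verit) divide_nonneg_pos)
  with assms show ?thesis by (simp add: divide_simps) (simp add: algebra_simps)
qed

lemma share_ge_one_minus_ratio:
  fixes x y :: real
  assumes "0 < x" "0 \<le> y"
  shows "1 - y / x \<le> x / (x + y)"
  using assms by (simp add: divide_simps) (simp add: algebra_simps)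

lemma reinforced_ratio_step:
  fixes A B x y fin bin q1 q2 H a0 W :: real
  assumes AB: "0 < A" "0 \<le> B" "B / A \<le> H"
    and x: "1 / (1 + H) \<le> x" and y: "0 \<le> y" "y \<le> H / (1 + H)"
    and inputs: "0 < fin" "0 < bin" and q: "0 \<le> q2" "q2 < q1"
    and a0: "0 < a0" "a0 \<le> q1 * bin / (1 + H)" and W: "A + B + fin \<le> W"
  shows "(B + fin * (B / (A + B)) + q2 * bin * y) / (A + fin * (A / (A + B)) + q1 * bin * x)
           \<le> (1 - (1 - q2 / q1) * (a0 / (W + a0))) * H"
proof -
  (* Proportional splitting scales the numerator's self-reinforcement term by exactly B / A;
     the cross-feed a favours the denominator by the factor q1 / q2. *)
  define w where "w = A + fin * (A / (A + B))"
  define a where "a = q1 * bin * x"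
  have H: "0 \<le> H" using AB by (smt (verit) divide_nonneg_pos)
  have "fin * (A / (A + B)) \<le> fin"
    using AB inputs by (intro mult_left_le) simp_all
  then have w: "0 < w" "w \<le> W"
    unfolding w_def using AB inputs W by (auto intro: add_pos_nonneg)
  have self: "B + fin * (B / (A + B)) = (B / A) * w"
  proof -
    have "(B / A) * w = (B / A) * A + fin * ((B / A) * A) / (A + B)"
      unfolding w_def by (simp add: distrib_left)
    then show ?thesis using AB by simp
  qed
  have "q1 * bin * (1 / (1 + H)) \<le> a"
    unfolding a_def using x q inputs by (intro mult_left_mono) auto
  then have a: "a0 \<le> a" using a0 by simp
  have "q2 * bin * y \<le> q2 * bin * (H * (1 / (1 + H)))"
    using y q inputs by (intro mult_left_mono) auto
  also have "\<dots> \<le> q2 * bin * (H * x)"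
    using x q inputs H by (intro mult_left_mono) auto
  also have "\<dots> = H * ((q2 / q1) * a)"
    unfolding a_def using q by simp
  finally have "q2 * bin * y \<le> H * ((q2 / q1) * a)" .
  moreover have "(B / A) * w \<le> H * w"
    using AB w by (intro mult_right_mono) auto
  ultimately have "(B / A) * w + q2 * bin * y \<le> H * (w + (q2 / q1) * a)"
    by (simp add: distrib_left)
  then have "(B + fin * (B / (A + B)) + q2 * bin * y) / (w + a) \<le> H * ((w + (q2 / q1) * a) / (w + a))"
    unfolding self using w a a0 by (simp add: divide_right_mono)
  also have "\<dots> \<le> H * (1 - (1 - q2 / q1) * (a0 / (W + a0)))"
  proof -
    have "(w + (q2 / q1) * a) / (w + a) \<le> 1 - (1 - q2 / q1) * (a0 / (W + a0))"
      using q by (intro weighted_mean_contraction[OF w a0(1) a]) simp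
    then show ?thesis using H by (rule mult_left_mono)
  qed
  finally show ?thesis
    unfolding w_def a_def by (simp add: mult.commute)
qed

lemma bounded_of_eventual_contraction:
  fixes X :: "nat \<Rightarrow> real" and \<delta> K :: real
  assumes \<delta>: "0 < \<delta>" "\<delta> < 1" and K: "0 \<le> K"
    and step: "\<And>n. L \<le> n \<Longrightarrow> X (Suc n) \<le> \<delta> * (X n + K)"
  shows "\<exists>M. \<forall>n. X n \<le> M"
proof -
  define M where "M = max (Max (X ` {..L})) (\<delta> * K / (1 - \<delta>))"
  have "X n \<le> M" for n
  proof (induction n)
    case 0
    show ?case unfolding M_def by (simp add: le_max_iff_disj)
  next
    case (Suc n)
    show ?case
    proof (cases "Suc n \<le> L")
      case True
      then show ?thesis unfolding M_def by (simp add: le_max_iff_disj)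
    next
      case False
      have "\<delta> * K / (1 - \<delta>) \<le> M" unfolding M_def by simp
      then have "\<delta> * K \<le> (1 - \<delta>) * M"
        using \<delta> by (simp add: pos_divide_le_eq mult.commute)
      have "X (Suc n) \<le> \<delta> * (X n + K)" using step False by simp
      also have "\<dots> \<le> \<delta> * (M + K)" using Suc.IH \<delta> by simp
      also have "\<dots> \<le> M" using \<open>\<delta> * K \<le> (1 - \<delta>) * M\<close> by (simp add: algebra_simps)
      finally show ?thesis .
    qed
  qed
  then show ?thesis by blast
qed

lemma geometric_blocks_below_after_log_time:
  fixes \<theta> V :: real and N :: nat
  assumes \<theta>: "0 < \<theta>" "\<theta> < 1" and V: "0 \<le> V" and N: "0 < N"
  shows "\<exists>C1>0. \<exists>C2>0. \<forall>\<epsilon>::real. 0 < \<epsilon> \<and> \<epsilon> < 1 \<longrightarrow>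
           (\<forall>t::nat. real t \<ge> C1 + C2 * ln (1 / \<epsilon>) \<longrightarrow> V * \<theta> ^ (t div N) \<le> \<epsilon>)"
proof -
  define rate where "rate = - ln \<theta>"
  define V' where "V' = max V 1"
  define C1 where "C1 = real N + real N * ln V' / rate"
  define C2 where "C2 = real N / rate"
  have rate: "0 < rate" unfolding rate_def using \<theta> by simp
  have V': "1 \<le> V'" "V \<le> V'" unfolding V'_def by auto
  have "0 < C1" "0 < C2"
    unfolding C1_def C2_def using rate N V' by (auto intro: add_pos_nonneg)
  moreover have "V * \<theta> ^ (t div N) \<le> \<epsilon>"
    if \<epsilon>: "0 < \<epsilon>" "\<epsilon> < 1" and t: "real t \<ge> C1 + C2 * ln (1 / \<epsilon>)" for \<epsilon> :: real and t :: nat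
  proof -
    define j where "j = t div N"
    have "t < N * (j + 1)"
      unfolding j_def using N by (metis add_mult_distrib2 div_mult_mod_eq mod_less_divisor
          mult.commute mult_1_right nat_add_left_cancel_less)
    then have "real t / real N - 1 < real j"
      using N by (simp add: field_simps flip: of_nat_mult of_nat_add)
    moreover have "real t / real N - 1 \<ge> (ln V' + ln (1 / \<epsilon>)) / rate"
      using t N rate unfolding C1_def C2_def by (simp add: field_simps)
    ultimately have "(ln V' + ln (1 / \<epsilon>)) / rate \<le> real j" by linarith
    then have "ln V' + ln (1 / \<epsilon>) \<le> real j * rate"
      using rate by (simp add: pos_divide_le_eq)
    then have "real j * ln \<theta> \<le> ln \<epsilon> - ln V'"
      unfolding rate_def using \<epsilon> by (simp add: ln_div)
    then have "exp (real j * ln \<theta>) \<le> exp (ln \<epsilon> - ln V')" by simp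
    then have "\<theta> ^ j \<le> \<epsilon> / V'"
      using \<theta> \<epsilon> V' by (simp add: exp_of_nat_mult exp_diff)
    then have "V' * \<theta> ^ j \<le> \<epsilon>"
      using V' by (simp add: field_simps)
    moreover have "V * \<theta> ^ j \<le> V' * \<theta> ^ j"
      using V' \<theta> by (intro mult_right_mono) auto
    ultimately show ?thesis unfolding j_def by simp
  qed
  ultimately show ?thesis by blast
qed

lemma windowed_contraction_geometric:
  fixes R :: "nat \<Rightarrow> real" and V \<theta> :: real and L n :: nat
  assumes V: "0 \<le> V" and \<theta>: "0 \<le> \<theta>" "\<theta> \<le> 1"
    and init: "\<And>n. n \<le> L \<Longrightarrow> R n \<le> V"
    and step: "\<And>n H. L \<le> n \<Longrightarrow> H \<le> V \<Longrightarrow> (\<And>j. n - L \<le> j \<Longrightarrow> j \<le> n \<Longrightarrow> R j \<le> H)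
                 \<Longrightarrow> R (Suc n) \<le> \<theta> * H"
  shows "R n \<le> V * \<theta> ^ (n div Suc L)"
proof -
  define h where "h n = V * \<theta> ^ (n div Suc L)" for n
  have h_antimono: "h j \<le> h i" if "i \<le> j" for i j
    unfolding h_def using V \<theta> that by (intro mult_left_mono power_decreasing div_le_mono) auto
  have "R n \<le> h n"
  proof (induction n rule: less_induct)
    case (less n)
    show ?case
    proof (cases "n \<le> L")
      case True
      then show ?thesis unfolding h_def using init by simp
    next
      case False
      then obtain n' where n: "n = Suc n'" "L \<le> n'" by (cases n) auto
      have "n div Suc L = Suc ((n' - L) div Suc L)"
        using n div_add_self2[of "Suc L" "n' - L"] by simp
      then have "h n = \<theta> * h (n' - L)" unfolding h_def by simp
      moreover have "h (n' - L) \<le> V" using h_antimono[of 0 "n' - L"] by (simp add: h_def)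
      moreover have "R j \<le> h (n' - L)" if "n' - L \<le> j" "j \<le> n'" for j
        using less.IH[of j] h_antimono[OF that(1)] that n by force
      ultimately show ?thesis using step n by simp
    qed
  qed
  then show ?thesis unfolding h_def .
qed

(* Abstract form of the dynamics at the two branching points: A, B are the pheromone levels on
   the first edges of the good and the bad path, C, D those on their last edges, q1, q2 the
   transmissions of the two paths and m, k their transit delays (number of edges minus one). *)
locale competing_recurrence =
  fixes \<delta> fin bin q1 q2 :: real and m k :: nat and A B C D :: "nat \<Rightarrow> real"
  assumes delta: "0 < \<delta>" "\<delta> < 1" and inputs: "0 < fin" "0 < bin"
    and transmissions: "0 \<le> q2" "q2 < q1" "q1 \<le> 1"
    and positive: "\<And>n. 0 < A n" "\<And>n. 0 \<le> B n" "\<And>n. 0 < C n" "\<And>n. 0 \<le> D n"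
    and rec_A: "\<And>n. m \<le> n \<Longrightarrow> A (Suc n) =
      \<delta> * (A n + fin * (A n / (A n + B n)) + q1 * bin * (C (n - m) / (C (n - m) + D (n - m))))"
    and rec_B: "\<And>n. k \<le> n \<Longrightarrow> B (Suc n) =
      \<delta> * (B n + fin * (B n / (A n + B n)) + q2 * bin * (D (n - k) / (C (n - k) + D (n - k))))"
    and rec_C: "\<And>n. m \<le> n \<Longrightarrow> C (Suc n) =
      \<delta> * (C n + bin * (C n / (C n + D n)) + q1 * fin * (A (n - m) / (A (n - m) + B (n - m))))"
    and rec_D: "\<And>n. k \<le> n \<Longrightarrow> D (Suc n) =
      \<delta> * (D n + bin * (D n / (C n + D n)) + q2 * fin * (B (n - k) / (A (n - k) + B (n - k))))"

lemma competing_recurrence_swap: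
  "competing_recurrence \<delta> fin bin q1 q2 m k A B C D \<Longrightarrow> competing_recurrence \<delta> bin fin q1 q2 m k C D A B"
  unfolding competing_recurrence_def by blast

context competing_recurrence
begin

lemma sum_AB_step:
  assumes "m \<le> n" "k \<le> n"
  shows "A (Suc n) + B (Suc n) \<le> \<delta> * (A n + B n + (fin + 2 * bin))"
proof -
  have share_le_1: "u / (u + v) \<le> 1" if "0 < u \<or> 0 < v" "0 \<le> u" "0 \<le> v" for u v :: real
    using that by (auto simp: divide_le_eq_1)
  have "fin * (A n / (A n + B n)) + fin * (B n / (A n + B n)) = fin"
    using positive[of n] by (simp add: add_divide_distrib[symmetric] flip: distrib_left)
  moreover have "q1 * bin * (C (n - m) / (C (n - m) + D (n - m))) \<le> 1 * bin * 1"
    using transmissions inputs positive(3,4)[of "n - m"] share_le_1 by (intro mult_mono) auto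
  moreover have "q2 * bin * (D (n - k) / (D (n - k) + C (n - k))) \<le> 1 * bin * 1"
    using transmissions inputs positive(3,4)[of "n - k"] share_le_1 by (intro mult_mono) auto
  ultimately show ?thesis
    using rec_A rec_B assms delta by (simp add: add.commute distrib_left[symmetric] mult_left_mono)
qed

lemma sums_bounded: "\<exists>M. \<forall>n. A n + B n \<le> M \<and> C n + D n \<le> M"
proof -
  interpret swapped: competing_recurrence \<delta> bin fin q1 q2 m k C D A B
    using competing_recurrence_swap competing_recurrence_axioms .
  have K: "0 \<le> fin + 2 * bin" "0 \<le> bin + 2 * fin" using inputs by auto
  obtain M1 where "\<forall>n. A n + B n \<le> M1"
    using bounded_of_eventual_contraction[OF delta K(1), of "max m k" "\<lambda>n. A n + B n"]
      sum_AB_step by auto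
  moreover obtain M2 where "\<forall>n. C n + D n \<le> M2"
    using bounded_of_eventual_contraction[OF delta K(2), of "max m k" "\<lambda>n. C n + D n"]
      swapped.sum_AB_step by auto
  ultimately show ?thesis by (meson max.coboundedI1 max.coboundedI2)
qed

lemma ratio_B_A_step:
  assumes n: "m \<le> n" "k \<le> n"
    and H: "B n / A n \<le> H" "D (n - m) / C (n - m) \<le> H" "D (n - k) / C (n - k) \<le> H"
    and a0: "0 < a0" "a0 \<le> q1 * bin / (1 + H)" and W: "A n + B n + fin \<le> W"
  shows "B (Suc n) / A (Suc n) \<le> (1 - (1 - q2 / q1) * (a0 / (W + a0))) * H"
proof -
  have "B (Suc n) / A (Suc n) =
      (B n + fin * (B n / (A n + B n)) + q2 * bin * (D (n - k) / (C (n - k) + D (n - k)))) /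
      (A n + fin * (A n / (A n + B n)) + q1 * bin * (C (n - m) / (C (n - m) + D (n - m))))"
    using rec_A rec_B n delta by simp
  also have "\<dots> \<le> (1 - (1 - q2 / q1) * (a0 / (W + a0))) * H"
    using positive H a0 W inputs transmissions less_imp_le[OF positive(3)]
    by (intro reinforced_ratio_step share_ge_of_ratio_le share_le_of_ratio_le)
      (auto intro!: divide_nonneg_nonneg add_nonneg_nonneg)
  finally show ?thesis .
qed

lemma contraction_factor_bounds:
  assumes "0 < a0" "0 < W"
  shows "0 < 1 - (1 - q2 / q1) * (a0 / (W + a0))" "1 - (1 - q2 / q1) * (a0 / (W + a0)) < 1"
proof -
  have share: "0 < a0 / (W + a0)" "a0 / (W + a0) < 1" using assms by (auto simp: divide_simps)
  have "0 < 1 - q2 / q1" "1 - q2 / q1 \<le> 1" using transmissions by auto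
  then have "0 < (1 - q2 / q1) * (a0 / (W + a0))" "(1 - q2 / q1) * (a0 / (W + a0)) \<le> a0 / (W + a0)"
    using share by (simp_all only: mult_pos_pos mult_left_le_one_le less_imp_le)
  then show "0 < 1 - (1 - q2 / q1) * (a0 / (W + a0))" "1 - (1 - q2 / q1) * (a0 / (W + a0)) < 1"
    using share by auto
qed

lemma ratios_contract:
  assumes n: "max m k \<le> n"
    and H: "\<And>j. n - max m k \<le> j \<Longrightarrow> j \<le> n \<Longrightarrow> B j / A j \<le> H \<and> D j / C j \<le> H"
    and a0: "0 < a0" "a0 \<le> q1 * min fin bin / (1 + H)"
    and W: "A n + B n + fin + bin \<le> W" "C n + D n + fin + bin \<le> W"
  shows "B (Suc n) / A (Suc n) \<le> (1 - (1 - q2 / q1) * (a0 / (W + a0))) * H"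
    "D (Suc n) / C (Suc n) \<le> (1 - (1 - q2 / q1) * (a0 / (W + a0))) * H"
proof -
  interpret swapped: competing_recurrence \<delta> bin fin q1 q2 m k C D A B
    using competing_recurrence_swap competing_recurrence_axioms .
  have window: "B j / A j \<le> H" "D j / C j \<le> H" if "j \<in> {n, n - m, n - k}" for j
    using H[of j] that n by auto
  have "0 \<le> B n / A n" using positive[of n] by simp
  then have "0 \<le> H" using window(1)[of n] by simp
  then have "q1 * min fin bin / (1 + H) \<le> q1 * bin / (1 + H)"
    "q1 * min fin bin / (1 + H) \<le> q1 * fin / (1 + H)"
    using transmissions by (intro divide_right_mono mult_left_mono; simp)+
  then have a0_le: "a0 \<le> q1 * bin / (1 + H)" "a0 \<le> q1 * fin / (1 + H)" using a0 by linarith+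
  show "B (Suc n) / A (Suc n) \<le> (1 - (1 - q2 / q1) * (a0 / (W + a0))) * H"
    using n window a0 a0_le W inputs by (intro ratio_B_A_step) auto
  show "D (Suc n) / C (Suc n) \<le> (1 - (1 - q2 / q1) * (a0 / (W + a0))) * H"
    using n window a0 a0_le W inputs by (intro swapped.ratio_B_A_step) auto
qed

theorem ratios_decay_geometrically:
  obtains V \<theta> :: real where "0 \<le> V" "0 < \<theta>" "\<theta> < 1"
    "\<And>n. B n / A n \<le> V * \<theta> ^ (n div Suc (max m k))"
    "\<And>n. D n / C n \<le> V * \<theta> ^ (n div Suc (max m k))"
proof -
  obtain M where M: "\<And>n. A n + B n \<le> M" "\<And>n. C n + D n \<le> M"
    using sums_bounded by blast
  define R where "R n = max (B n / A n) (D n / C n)" for n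
  define V where "V = Max (R ` {..max m k})"
  define a0 where "a0 = q1 * min fin bin / (1 + V)"
  define W where "W = M + fin + bin"
  define \<theta> where "\<theta> = 1 - (1 - q2 / q1) * (a0 / (W + a0))"
  have R_nonneg: "0 \<le> R n" for n
    unfolding R_def using positive[of n] by (simp add: le_max_iff_disj)
  have R_le_V: "R n \<le> V" if "n \<le> max m k" for n
    unfolding V_def using that by (intro Max_ge) auto
  have V: "0 \<le> V" using R_nonneg[of 0] R_le_V[of 0] by simp
  have a0: "0 < a0" unfolding a0_def using V transmissions inputs by simp
  have "0 < W" unfolding W_def using M(1)[of 0] positive[of 0] inputs by linarith
  then have \<theta>: "0 < \<theta>" "\<theta> < 1" unfolding \<theta>_def using contraction_factor_bounds a0 by blast+
  have "R n \<le> V * \<theta> ^ (n div Suc (max m k))" for n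
  proof (rule windowed_contraction_geometric[OF V less_imp_le[OF \<theta>(1)] less_imp_le[OF \<theta>(2)] R_le_V])
    fix n H
    assume n: "max m k \<le> n" and H: "H \<le> V" "\<And>j. n - max m k \<le> j \<Longrightarrow> j \<le> n \<Longrightarrow> R j \<le> H"
    have "0 \<le> H" using H(2)[of n] R_nonneg[of n] by simp
    then have "a0 \<le> q1 * min fin bin / (1 + H)"
      unfolding a0_def using H(1) transmissions inputs by (intro divide_left_mono) auto
    then show "R (Suc n) \<le> \<theta> * H"
      using ratios_contract[OF n _ a0] H(2) M[of n] inputs
      unfolding R_def \<theta>_def W_def by (simp add: mult.commute)
  qed
  then show ?thesis
    using that[OF V \<theta>] unfolding R_def by simp
qed

corollary ratios_small_after_log_time:
  "\<exists>C1>0. \<exists>C2>0. \<forall>\<epsilon>::real. 0 < \<epsilon> \<and> \<epsilon> < 1 \<longrightarrow>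
     (\<forall>t::nat. real t \<ge> C1 + C2 * ln (1 / \<epsilon>) \<longrightarrow> B t / A t \<le> \<epsilon> \<and> D t / C t \<le> \<epsilon>)"
proof -
  obtain V \<theta> :: real where V\<theta>: "0 \<le> V" "0 < \<theta>" "\<theta> < 1"
    and decay: "\<And>n. B n / A n \<le> V * \<theta> ^ (n div Suc (max m k))"
      "\<And>n. D n / C n \<le> V * \<theta> ^ (n div Suc (max m k))"
    using ratios_decay_geometrically by blast
  show ?thesis
    using geometric_blocks_below_after_log_time[OF V\<theta>(2,3,1), of "Suc (max m k)"]
    by (meson decay order_trans zero_less_Suc)
qed

end

lemma mem_path_edges_iff:
  "(x, y) \<in> path_edges P \<longleftrightarrow> (\<exists>i. Suc i < length P \<and> x = P ! i \<and> y = P ! Suc i)"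
  by (auto simp: path_edges_def set_zip nth_tl less_diff_conv)

lemma path_edges_subset: "path_edges P \<subseteq> set P \<times> set P"
  by (auto simp: mem_path_edges_iff)

lemma distinct_path_edges_from:
  assumes "distinct P" "i < length P"
  shows "(P ! i, y) \<in> path_edges P \<longleftrightarrow> Suc i < length P \<and> y = P ! Suc i"
  using assms by (auto simp: mem_path_edges_iff nth_eq_iff_index_eq)

lemma distinct_path_edges_into:
  assumes "distinct P" "j < length P"
  shows "(x, P ! j) \<in> path_edges P \<longleftrightarrow> 0 < j \<and> x = P ! (j - 1)"
  using assms by (auto simp: mem_path_edges_iff nth_eq_iff_index_eq intro!: exI[of _ "j - 1"])

locale parallel_paths =
  fixes E :: "('v \<times> 'v) set" and s d :: 'v and P Q :: "'v list"
  assumes parallel: "two_parallel_paths E s d P Q"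
begin

definition n :: nat where "n = length P - 1"
definition k :: nat where "k = length Q - 1"

lemma distinct_P: "distinct P" and distinct_Q: "distinct Q" and P_ne_Q: "P \<noteq> Q"
  and P_inter_Q: "set P \<inter> set Q = {s, d}" and E_eq: "E = path_edges P \<union> path_edges Q"
  using parallel unfolding two_parallel_paths_def is_path_def by auto

lemma length_P: "length P = Suc n" "1 \<le> n" and length_Q: "length Q = Suc k" "1 \<le> k"
  using parallel unfolding two_parallel_paths_def is_path_def n_def k_def by auto

lemma P_first: "P ! 0 = s" and P_last: "P ! n = d" and Q_first: "Q ! 0 = s" and Q_last: "Q ! k = d"
proof -
  have "hd P = s" "last P = d" "hd Q = s" "last Q = d"
    using parallel unfolding two_parallel_paths_def is_path_def by auto
  moreover have "P \<noteq> []" "Q \<noteq> []" using length_P length_Q by auto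
  ultimately show "P ! 0 = s" "P ! n = d" "Q ! 0 = s" "Q ! k = d"
    unfolding n_def k_def by (simp_all add: hd_conv_nth last_conv_nth)
qed

lemma P_nth_eq_iff: "i \<le> n \<Longrightarrow> j \<le> n \<Longrightarrow> P ! i = P ! j \<longleftrightarrow> i = j"
  using distinct_P length_P by (simp add: nth_eq_iff_index_eq)

lemma Q_nth_eq_iff: "i \<le> k \<Longrightarrow> j \<le> k \<Longrightarrow> Q ! i = Q ! j \<longleftrightarrow> i = j"
  using distinct_Q length_Q by (simp add: nth_eq_iff_index_eq)

lemma edge_vertices: "(u, v) \<in> E \<Longrightarrow> u \<in> set P \<union> set Q \<and> v \<in> set P \<union> set Q"
  using path_edges_subset unfolding E_eq by blast

lemma P_edge: "i < n \<Longrightarrow> (P ! i, P ! Suc i) \<in> E"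
  using length_P unfolding E_eq by (auto simp: mem_path_edges_iff)

lemma Q_edge: "i < k \<Longrightarrow> (Q ! i, Q ! Suc i) \<in> E"
  using length_Q unfolding E_eq by (auto simp: mem_path_edges_iff)

lemma internal_not_in_Q:
  assumes "0 < i" "i < n"
  shows "P ! i \<notin> set Q"
proof
  assume "P ! i \<in> set Q"
  moreover have "P ! i \<in> set P" using assms length_P by simp
  ultimately have "P ! i = P ! 0 \<or> P ! i = P ! n" using P_inter_Q P_first P_last by blast
  then show False using P_nth_eq_iff[of i 0] P_nth_eq_iff[of i n] assms by simp
qed

lemma out_nbrs_internal:
  assumes "0 < i" "i < n"
  shows "out_nbrs E (P ! i) = {P ! Suc i}"
proof -
  have "(P ! i, z) \<notin> path_edges Q" for z
    using internal_not_in_Q[OF assms] path_edges_subset by blast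
  then have "(P ! i, z) \<in> E \<longleftrightarrow> z = P ! Suc i" for z
    using assms length_P distinct_path_edges_from[OF distinct_P, of i z] unfolding E_eq by simp
  then show ?thesis unfolding out_nbrs_def by blast
qed

lemma in_nbrs_internal:
  assumes "0 < i" "i < n"
  shows "in_nbrs E (P ! i) = {P ! (i - 1)}"
proof -
  have "(z, P ! i) \<notin> path_edges Q" for z
    using internal_not_in_Q[OF assms] path_edges_subset by blast
  then have "(z, P ! i) \<in> E \<longleftrightarrow> z = P ! (i - 1)" for z
    using assms length_P distinct_path_edges_into[OF distinct_P, of i z] unfolding E_eq by simp
  then show ?thesis unfolding in_nbrs_def by blast
qed

lemma out_nbrs_source: "out_nbrs E s = {P ! 1, Q ! 1}"
proof -
  have "(s, z) \<in> E \<longleftrightarrow> z = P ! 1 \<or> z = Q ! 1" for z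
    using distinct_path_edges_from[OF distinct_P, of 0 z] distinct_path_edges_from[OF distinct_Q, of 0 z]
      length_P length_Q unfolding E_eq P_first Q_first by simp
  then show ?thesis unfolding out_nbrs_def by blast
qed

lemma in_nbrs_sink: "in_nbrs E d = {P ! (n - 1), Q ! (k - 1)}"
proof -
  have "(z, d) \<in> E \<longleftrightarrow> z = P ! (n - 1) \<or> z = Q ! (k - 1)" for z
    using distinct_path_edges_into[OF distinct_P, of n z] distinct_path_edges_into[OF distinct_Q, of k z]
      length_P length_Q unfolding E_eq P_last Q_last by simp
  then show ?thesis unfolding in_nbrs_def by blast
qed

lemma not_both_single_edge: "\<not> (n = 1 \<and> k = 1)"
proof
  assume "n = 1 \<and> k = 1"
  then have "n = 1" "k = 1" by simp_all
  have two_elems: "xs = [xs ! 0, xs ! 1]" if "length xs = 2" for xs :: "'v list"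
    using that by (intro nth_equalityI) (auto simp: less_2_cases_iff)
  have "P = [s, d]" "Q = [s, d]"
    using two_elems[of P] two_elems[of Q] \<open>n = 1\<close> \<open>k = 1\<close> length_P length_Q P_first P_last Q_first Q_last
    by simp_all
  then show False using P_ne_Q by simp
qed

lemma second_vertices_distinct: "P ! 1 \<noteq> Q ! 1"
proof
  assume eq: "P ! 1 = Q ! 1"
  have "P ! 1 \<in> set P" "Q ! 1 \<in> set Q" using length_P length_Q by simp_all
  then have "P ! 1 \<in> set P \<inter> set Q" using eq by (metis IntI)
  then have "P ! 1 = d" using P_nth_eq_iff[of 1 0] length_P P_first unfolding P_inter_Q by auto
  then have "n = 1" using P_nth_eq_iff[of 1 n] length_P P_last by simp
  have "Q ! 1 = d" using eq \<open>P ! 1 = d\<close> by simp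
  then have "k = 1" using Q_nth_eq_iff[of 1 k] length_Q Q_last by simp
  show False using not_both_single_edge \<open>n = 1\<close> \<open>k = 1\<close> by simp
qed

lemma penultimate_vertices_distinct: "P ! (n - 1) \<noteq> Q ! (k - 1)"
proof
  assume eq: "P ! (n - 1) = Q ! (k - 1)"
  have "P ! (n - 1) \<in> set P" "Q ! (k - 1) \<in> set Q" using length_P length_Q by simp_all
  then have "P ! (n - 1) \<in> set P \<inter> set Q" using eq by (metis IntI)
  then have "P ! (n - 1) = s" using P_nth_eq_iff[of "n - 1" n] length_P P_last unfolding P_inter_Q by auto
  then have "n = 1" using P_nth_eq_iff[of "n - 1" 0] length_P P_first by simp
  have "Q ! (k - 1) = s" using eq \<open>P ! (n - 1) = s\<close> by simp
  then have "k = 1" using Q_nth_eq_iff[of "k - 1" 0] length_Q Q_first by simp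
  show False using not_both_single_edge \<open>n = 1\<close> \<open>k = 1\<close> by simp
qed

end

lemma parallel_paths_swap: "parallel_paths E s d P Q \<Longrightarrow> parallel_paths E s d Q P"
  unfolding parallel_paths_def two_parallel_paths_def by (metis Int_commute Un_commute)

definition path_transmission :: "('v \<Rightarrow> real) \<Rightarrow> 'v \<Rightarrow> 'v \<Rightarrow> 'v list \<Rightarrow> real" where
  "path_transmission l s d P = (\<Prod>v\<in>set P - {s, d}. 1 - l v)"

lemma path_transmission_eq: "path_transmission l s d P = 1 - path_leakage l s d P"
  by (simp add: path_transmission_def path_leakage_def)

lemma fwd_edge_flow_nonneg:
  assumes "\<forall>z\<in>out_nbrs E u. 0 \<le> p (u, z)" "0 \<le> p (u, v)" "0 \<le> f u"
  shows "0 \<le> fwd_edge_flow E p f u v"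
  using assms unfolding fwd_edge_flow_def nu_f_def by (simp add: sum_nonneg)

lemma bwd_edge_flow_nonneg:
  assumes "\<forall>z\<in>in_nbrs E v. 0 \<le> p (z, v)" "0 \<le> p (u, v)" "0 \<le> b v"
  shows "0 \<le> bwd_edge_flow E p b u v"
  using assms unfolding bwd_edge_flow_def nu_b_def by (simp add: sum_nonneg)

locale parallel_paths_dynamics = parallel_paths E s d P Q
  for E :: "('v \<times> 'v) set" and s d :: 'v and P Q :: "'v list" +
  fixes l :: "'v \<Rightarrow> real" and \<delta> fbar bbar :: real
    and p :: "nat \<Rightarrow> 'v \<times> 'v \<Rightarrow> real" and f b :: "nat \<Rightarrow> 'v \<Rightarrow> real"
  assumes leak: "\<forall>v \<in> set P \<union> set Q. 0 \<le> l v \<and> l v \<le> 1"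
    and delta: "0 < \<delta>" "\<delta> < 1" and inputs: "0 < fbar" "0 < bbar"
    and dyn: "ant_dynamics E s d l \<delta> (\<lambda>_. fbar) (\<lambda>_. bbar) p f b"
begin

lemma initial_nonneg: "\<forall>e\<in>E. 0 \<le> p 0 e" "0 \<le> f 0 v" "0 \<le> b 0 v"
  and f_source: "f t s = fbar" and b_sink: "b t d = bbar"
  and f_step: "v \<noteq> s \<Longrightarrow> f (Suc t) v = (1 - l v) * (\<Sum>z\<in>in_nbrs E v. fwd_edge_flow E (p t) (f t) z v)"
  and b_step: "u \<noteq> d \<Longrightarrow> b (Suc t) u = (1 - l u) * (\<Sum>z\<in>out_nbrs E u. bwd_edge_flow E (p t) (b t) u z)"
  and p_step: "(u, v) \<in> E \<Longrightarrow> p (Suc t) (u, v) =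
      \<delta> * (p t (u, v) + fwd_edge_flow E (p t) (f t) u v + bwd_edge_flow E (p t) (b t) u v)"
  using dyn unfolding ant_dynamics_def by auto

lemma edge_flows_nonneg_of_state:
  assumes p: "\<forall>e\<in>E. 0 \<le> p t e" and fb: "\<forall>v\<in>set P \<union> set Q. 0 \<le> f t v \<and> 0 \<le> b t v"
    and uv: "(u, v) \<in> E"
  shows "0 \<le> fwd_edge_flow E (p t) (f t) u v" "0 \<le> bwd_edge_flow E (p t) (b t) u v"
  using p fb edge_vertices[OF uv] uv
  by (auto intro!: fwd_edge_flow_nonneg bwd_edge_flow_nonneg simp: out_nbrs_def in_nbrs_def)

lemma state_nonneg: "(\<forall>e\<in>E. 0 \<le> p t e) \<and> (\<forall>v\<in>set P \<union> set Q. 0 \<le> f t v \<and> 0 \<le> b t v)"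
proof (induction t)
  case 0
  then show ?case using initial_nonneg by simp
next
  case (Suc t)
  note flows = edge_flows_nonneg_of_state[of t, OF Suc.IH[THEN conjunct1] Suc.IH[THEN conjunct2]]
  have "0 \<le> p (Suc t) (u, v)" if "(u, v) \<in> E" for u v
    using p_step[OF that] flows[OF that] Suc.IH that delta by simp
  moreover have "0 \<le> f (Suc t) v" if "v \<in> set P \<union> set Q" for v
  proof (cases "v = s")
    case False
    have "0 \<le> (\<Sum>z\<in>in_nbrs E v. fwd_edge_flow E (p t) (f t) z v)"
      using flows by (intro sum_nonneg) (simp add: in_nbrs_def)
    then show ?thesis using f_step[OF False] leak that by simp
  qed (simp add: f_source less_imp_le[OF inputs(1)])
  moreover have "0 \<le> b (Suc t) v" if "v \<in> set P \<union> set Q" for v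
  proof (cases "v = d")
    case False
    have "0 \<le> (\<Sum>z\<in>out_nbrs E v. bwd_edge_flow E (p t) (b t) v z)"
      using flows by (intro sum_nonneg) (simp add: out_nbrs_def)
    then show ?thesis using b_step[OF False] leak that by simp
  qed (simp add: b_sink less_imp_le[OF inputs(2)])
  ultimately show ?case by auto
qed

lemma p_nonneg: "e \<in> E \<Longrightarrow> 0 \<le> p t e"
  using state_nonneg by blast

lemma p_step_ge: "e \<in> E \<Longrightarrow> \<delta> * p t e \<le> p (Suc t) e"
  using p_step edge_flows_nonneg_of_state state_nonneg delta
  by (cases e) (simp add: mult_left_mono)

lemma p_pos_on_P:
  assumes init: "\<forall>e\<in>path_edges P. 0 < p 0 e" and i: "i < n"
  shows "0 < p t (P ! i, P ! Suc i)"
proof (induction t)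
  case 0
  have "(P ! i, P ! Suc i) \<in> path_edges P"
    unfolding mem_path_edges_iff using i length_P by (intro exI[of _ i]) simp
  then show ?case using init by blast
next
  case (Suc t)
  then show ?case
    using p_step_ge[OF P_edge[OF i], of t] delta by (smt (verit) mult_pos_pos)
qed

definition p_source :: "nat \<Rightarrow> real" where "p_source t = p t (s, P ! 1)"
definition p_sink :: "nat \<Rightarrow> real" where "p_sink t = p t (P ! (n - 1), d)"
definition nu_source :: "nat \<Rightarrow> real" where "nu_source t = nu_f E (p t) s (P ! 1)"
definition nu_sink :: "nat \<Rightarrow> real" where "nu_sink t = nu_b E (p t) (P ! (n - 1)) d"

lemma card_out_nbrs_source: "card (out_nbrs E s) = 2"
  using out_nbrs_source second_vertices_distinct by simp

lemma card_in_nbrs_sink: "card (in_nbrs E d) = 2"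
  using in_nbrs_sink penultimate_vertices_distinct by simp

lemma forward_flow_along_P:
  "i < n \<Longrightarrow> fwd_edge_flow E (p (t + i)) (f (t + i)) (P ! i) (P ! Suc i)
     = (\<Prod>j\<in>{1..i}. 1 - l (P ! j)) * (fbar * nu_source t)"
proof (induction i)
  case 0
  show ?case
    unfolding fwd_edge_flow_def nu_source_def using card_out_nbrs_source P_first f_source by simp
next
  case (Suc i)
  let ?v = "P ! Suc i"
  have i: "0 < Suc i" "Suc i < n" using Suc.prems by auto
  have "fwd_edge_flow E (p (t + Suc i)) (f (t + Suc i)) ?v (P ! Suc (Suc i)) = f (Suc (t + i)) ?v"
    unfolding fwd_edge_flow_def using out_nbrs_internal[OF i] by simp
  also have "\<dots> = (1 - l ?v) * fwd_edge_flow E (p (t + i)) (f (t + i)) (P ! i) ?v"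
    using f_step[of ?v "t + i"] P_nth_eq_iff[of "Suc i" 0] P_first in_nbrs_internal[OF i] i by simp
  also have "\<dots> = (\<Prod>j\<in>{1..Suc i}. 1 - l (P ! j)) * (fbar * nu_source t)"
    using Suc by simp
  finally show ?case .
qed

lemma backward_flow_along_P:
  "i < n \<Longrightarrow> bwd_edge_flow E (p (t + i)) (b (t + i)) (P ! (n - Suc i)) (P ! (n - i))
     = (\<Prod>j\<in>{1..i}. 1 - l (P ! (n - j))) * (bbar * nu_sink t)"
proof (induction i)
  case 0
  show ?case
    unfolding bwd_edge_flow_def nu_sink_def using card_in_nbrs_sink P_last b_sink by simp
next
  case (Suc i)
  let ?v = "P ! (n - Suc i)"
  have i: "0 < n - Suc i" "n - Suc i < n" and succ: "Suc (n - Suc i) = n - i"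
    using Suc.prems by auto
  have pred: "n - Suc i - 1 = n - Suc (Suc i)" by simp
  have "bwd_edge_flow E (p (t + Suc i)) (b (t + Suc i)) (P ! (n - Suc (Suc i))) ?v = b (Suc (t + i)) ?v"
    unfolding bwd_edge_flow_def using in_nbrs_internal[OF i] unfolding pred by simp
  also have "\<dots> = (1 - l ?v) * bwd_edge_flow E (p (t + i)) (b (t + i)) ?v (P ! (n - i))"
  proof -
    have "?v \<noteq> d" using P_nth_eq_iff[of "n - Suc i" n] P_last Suc.prems by simp
    then show ?thesis using b_step[of ?v "t + i"] out_nbrs_internal[OF i] unfolding succ by simp
  qed
  also have "\<dots> = (\<Prod>j\<in>{1..Suc i}. 1 - l (P ! (n - j))) * (bbar * nu_sink t)"
    using Suc by simp
  finally show ?case .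
qed

lemma path_transmission_P: "path_transmission l s d P = (\<Prod>j\<in>{1..n - 1}. 1 - l (P ! j))"
proof -
  have "set P - {s, d} = (\<lambda>j. P ! j) ` {1..n - 1}"
  proof
    show "set P - {s, d} \<subseteq> (\<lambda>j. P ! j) ` {1..n - 1}"
    proof
      fix v assume v: "v \<in> set P - {s, d}"
      then obtain j where j: "j < length P" "v = P ! j" by (auto simp: in_set_conv_nth)
      have "v \<noteq> P ! 0" "v \<noteq> P ! n" using v P_first P_last by auto
      then have "j \<noteq> 0" "j \<noteq> n" using j(2) by metis+
      then show "v \<in> (\<lambda>j. P ! j) ` {1..n - 1}" using j length_P by (intro image_eqI[of _ _ j]) auto
    qed
    show "(\<lambda>j. P ! j) ` {1..n - 1} \<subseteq> set P - {s, d}"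
    proof
      fix v assume "v \<in> (\<lambda>j. P ! j) ` {1..n - 1}"
      then obtain j where j: "1 \<le> j" "j \<le> n - 1" "v = P ! j" by auto
      then have "P ! j \<noteq> P ! 0" "P ! j \<noteq> P ! n" using P_nth_eq_iff length_P by auto
      then show "v \<in> set P - {s, d}" using j length_P P_first P_last by auto
    qed
  qed
  moreover have "inj_on (\<lambda>j. P ! j) {1..n - 1}"
    using P_nth_eq_iff by (auto simp: inj_on_def)
  ultimately show ?thesis
    unfolding path_transmission_def by (simp add: prod.reindex)
qed

lemma path_transmission_P_rev: "path_transmission l s d P = (\<Prod>j\<in>{1..n - 1}. 1 - l (P ! (n - j)))"
  using prod.atLeastAtMost_rev[of "\<lambda>j. 1 - l (P ! j)" 1 "n - 1"] length_P
  unfolding path_transmission_P by simp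

lemma p_source_step:
  assumes "n - 1 \<le> t"
  shows "p_source (Suc t) = \<delta> * (p_source t + fbar * nu_source t
           + path_transmission l s d P * bbar * nu_sink (t - (n - 1)))"
proof -
  have "fwd_edge_flow E (p t) (f t) s (P ! 1) = fbar * nu_source t"
    using forward_flow_along_P[of 0 t] length_P P_first by simp
  moreover have "bwd_edge_flow E (p t) (b t) s (P ! 1) = path_transmission l s d P * (bbar * nu_sink (t - (n - 1)))"
    using backward_flow_along_P[of "n - 1" "t - (n - 1)"] assms length_P P_first
    unfolding path_transmission_P_rev by (simp add: Suc_diff_le)
  ultimately show ?thesis
    unfolding p_source_def using p_step[OF P_edge[of 0]] length_P P_first by simp
qed

lemma p_sink_step:
  assumes "n - 1 \<le> t"
  shows "p_sink (Suc t) = \<delta> * (p_sink t + bbar * nu_sink t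
           + path_transmission l s d P * fbar * nu_source (t - (n - 1)))"
proof -
  have "bwd_edge_flow E (p t) (b t) (P ! (n - 1)) d = bbar * nu_sink t"
    using backward_flow_along_P[of 0 t] length_P P_last by simp
  moreover have "fwd_edge_flow E (p t) (f t) (P ! (n - 1)) d = path_transmission l s d P * (fbar * nu_source (t - (n - 1)))"
    using forward_flow_along_P[of "n - 1" "t - (n - 1)"] assms length_P P_last
    unfolding path_transmission_P by simp
  ultimately show ?thesis
    unfolding p_sink_def using p_step[OF P_edge[of "n - 1"]] length_P P_last by (simp add: algebra_simps)
qed

lemma nu_source_eq: "nu_source t = p_source t / (p_source t + p t (s, Q ! 1))"
  unfolding nu_source_def p_source_def nu_f_def out_nbrs_source using second_vertices_distinct by simp

lemma nu_sink_eq: "nu_sink t = p_sink t / (p_sink t + p t (Q ! (k - 1), d))"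
  unfolding nu_sink_def p_sink_def nu_b_def in_nbrs_sink using penultimate_vertices_distinct by simp

lemma p_source_sink_pos:
  assumes init: "\<forall>e\<in>path_edges P. 0 < p 0 e"
  shows "0 < p_source t" "0 < p_sink t"
  unfolding p_source_def p_sink_def
  using p_pos_on_P[OF init, of 0 t] p_pos_on_P[OF init, of "n - 1" t] length_P P_first P_last
  by simp_all

lemma p_Q_end_edges_nonneg: "0 \<le> p t (s, Q ! 1)" "0 \<le> p t (Q ! (k - 1), d)"
  using p_nonneg[OF Q_edge[of 0]] p_nonneg[OF Q_edge[of "k - 1"]] length_Q Q_first Q_last
  by simp_all

lemma nu_f_P_edge:
  assumes init: "\<forall>e\<in>path_edges P. 0 < p 0 e" and i: "i < n"
  shows "nu_f E (p t) (P ! i) (P ! Suc i) = (if i = 0 then nu_source t else 1)"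
proof (cases "i = 0")
  case False
  then show ?thesis
    unfolding nu_f_def using out_nbrs_internal[OF _ i] p_pos_on_P[OF init i, of t] by simp
qed (simp add: nu_source_def P_first)

lemma nu_b_P_edge:
  assumes init: "\<forall>e\<in>path_edges P. 0 < p 0 e" and i: "i < n"
  shows "nu_b E (p t) (P ! i) (P ! Suc i) = (if Suc i = n then nu_sink t else 1)"
proof (cases "Suc i = n")
  case True
  then show ?thesis unfolding nu_sink_def using P_last by (simp flip: True)
next
  case False
  then have "0 < Suc i" "Suc i < n" using i by auto
  then show ?thesis
    unfolding nu_b_def using in_nbrs_internal p_pos_on_P[OF init i, of t] False by simp
qed

end

lemma parallel_paths_dynamics_swap:
  "parallel_paths_dynamics E s d P Q l \<delta> fbar bbar p f b \<Longrightarrow> parallel_paths_dynamics E s d Q P l \<delta> fbar bbar p f b"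
  unfolding parallel_paths_dynamics_def parallel_paths_dynamics_axioms_def
  using parallel_paths_swap by (metis Un_commute)

context parallel_paths_dynamics
begin

lemma competing_recurrence_instance:
  assumes init: "\<forall>e\<in>path_edges P. 0 < p 0 e"
    and less: "path_transmission l s d Q < path_transmission l s d P"
  shows "competing_recurrence \<delta> fbar bbar (path_transmission l s d P) (path_transmission l s d Q)
           (n - 1) (k - 1) p_source (\<lambda>t. p t (s, Q ! 1)) p_sink (\<lambda>t. p t (Q ! (k - 1), d))"
proof -
  interpret swapped: parallel_paths_dynamics E s d Q P l \<delta> fbar bbar p f b
    using parallel_paths_dynamics_swap parallel_paths_dynamics_axioms .
  have swapped_n: "swapped.n = k" and swapped_k: "swapped.k = n"
    unfolding swapped.n_def swapped.k_def n_def k_def by simp_all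
  have swapped_p: "swapped.p_source t = p t (s, Q ! 1)" "swapped.p_sink t = p t (Q ! (k - 1), d)" for t
    unfolding swapped.p_source_def swapped.p_sink_def swapped_n by simp_all
  have nu: "nu_source t = p_source t / (p_source t + p t (s, Q ! 1))"
    "nu_sink t = p_sink t / (p_sink t + p t (Q ! (k - 1), d))"
    "swapped.nu_source t = p t (s, Q ! 1) / (p_source t + p t (s, Q ! 1))"
    "swapped.nu_sink t = p t (Q ! (k - 1), d) / (p_sink t + p t (Q ! (k - 1), d))" for t
    using nu_source_eq nu_sink_eq swapped.nu_source_eq swapped.nu_sink_eq
    unfolding swapped_p swapped_n swapped_k p_source_def p_sink_def by (simp_all add: add.commute)
  show ?thesis
  proof
    show "0 \<le> path_transmission l s d Q" "path_transmission l s d P \<le> 1"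
      using leak unfolding path_transmission_def by (auto intro!: prod_nonneg prod_le_1)
  qed (use delta inputs less p_source_sink_pos[OF init] p_Q_end_edges_nonneg p_source_step p_sink_step swapped.p_source_step swapped.p_sink_step
      in \<open>simp_all only: nu swapped_p swapped_n\<close>)
qed

lemma nu_on_P_lower_bound:
  assumes init: "\<forall>e\<in>path_edges P. 0 < p 0 e" and uv: "(u, v) \<in> path_edges P"
  shows "1 - p t (s, Q ! 1) / p_source t \<le> nu_f E (p t) u v"
    "1 - p t (Q ! (k - 1), d) / p_sink t \<le> nu_b E (p t) u v"
proof -
  obtain i where i: "i < n" "u = P ! i" "v = P ! Suc i"
    using uv length_P unfolding mem_path_edges_iff by auto
  show "1 - p t (s, Q ! 1) / p_source t \<le> nu_f E (p t) u v"
    "1 - p t (Q ! (k - 1), d) / p_sink t \<le> nu_b E (p t) u v"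
    using p_source_sink_pos[OF init, of t] p_Q_end_edges_nonneg[of t]
    unfolding i nu_f_P_edge[OF init i(1)] nu_b_P_edge[OF init i(1)] nu_source_eq nu_sink_eq
    by (simp_all add: share_ge_one_minus_ratio)
qed

end

theorem theorem1:
  fixes E :: "('v \<times> 'v) set" and s d :: 'v and P1 P2 :: "'v list"
    and l :: "'v \<Rightarrow> real" and \<delta> fbar bbar :: real
    and p :: "nat \<Rightarrow> 'v \<times> 'v \<Rightarrow> real" and f b :: "nat \<Rightarrow> 'v \<Rightarrow> real"
  assumes G: "two_parallel_paths E s d P1 P2"
    and leak: "\<forall>v \<in> set P1 \<union> set P2. 0 \<le> l v \<and> l v \<le> 1"
    and less: "path_leakage l s d P1 < path_leakage l s d P2"
    and delta: "0 < \<delta>" "\<delta> < 1"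
    and inputs: "fbar > 0" "bbar > 0"
    and dyn: "ant_dynamics E s d l \<delta> (\<lambda>_. fbar) (\<lambda>_. bbar) p f b"
    and init: "\<forall>e \<in> path_edges P1. p 0 e > 0"
  shows "\<exists>C1 > 0. \<exists>C2 > 0. \<forall>\<epsilon>::real. 0 < \<epsilon> \<and> \<epsilon> < 1 \<longrightarrow>
           (\<forall>t::nat. real t \<ge> C1 + C2 * ln (1 / \<epsilon>) \<longrightarrow>
             (\<forall>(u, v) \<in> path_edges P1.
                nu_f E (p t) u v \<ge> 1 - \<epsilon> \<and> nu_b E (p t) u v \<ge> 1 - \<epsilon>))"
proof -
  interpret D: parallel_paths_dynamics E s d P1 P2 l \<delta> fbar bbar p f b
    using G leak delta inputs dyn
    by (simp add: parallel_paths_dynamics_def parallel_paths_dynamics_axioms_def parallel_paths_def)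
  interpret R: competing_recurrence \<delta> fbar bbar "path_transmission l s d P1" "path_transmission l s d P2"
      "D.n - 1" "D.k - 1" D.p_source "\<lambda>t. p t (s, P2 ! 1)" D.p_sink "\<lambda>t. p t (P2 ! (D.k - 1), d)"
    using D.competing_recurrence_instance[OF init] less by (simp add: path_transmission_eq)
  obtain C1 C2 :: real where "0 < C1" "0 < C2" and small: "\<forall>\<epsilon>::real. 0 < \<epsilon> \<and> \<epsilon> < 1 \<longrightarrow>
      (\<forall>t::nat. real t \<ge> C1 + C2 * ln (1 / \<epsilon>) \<longrightarrow>
        p t (s, P2 ! 1) / D.p_source t \<le> \<epsilon> \<and> p t (P2 ! (D.k - 1), d) / D.p_sink t \<le> \<epsilon>)"
    using R.ratios_small_after_log_time by blast
  moreover have "1 - \<epsilon> \<le> nu_f E (p t) u v \<and> 1 - \<epsilon> \<le> nu_b E (p t) u v"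
    if "0 < \<epsilon> \<and> \<epsilon> < 1" "real t \<ge> C1 + C2 * ln (1 / \<epsilon>)" "(u, v) \<in> path_edges P1"
    for \<epsilon> t u v
    using small that D.nu_on_P_lower_bound[OF init that(3), of t] by fastforce
  ultimately show ?thesis by blast
qed

end
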